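(* Let $n\ge 1$, let $\Gamma\in G_n$, and let $M_\Gamma\in M_{n+1,n}(\mathbb{N})$ be its multiplicity matrix. If $\mathrm{rank}(M_\Gamma)=n$, then $\Gamma$ has a minimal reduction, i.e. there is a subgraph $\gamma$ of $\Gamma$, obtained from $\Gamma$ by deleting edges only, such that $\gamma\in G_n$ and $\gamma$ has exactly $n+1$ edges.
   Context: For $n\ge 1$, $G_n$ denotes the set of finite (multi)graphs with $2n+1$ vertices, $n$ of them in "level 1" and $n+1$ in "level 2", such that (I) every edge joins a level-1 vertex to a level-2 vertex (no edges within a level; multiple edges allowed), and (II) every vertex is incident to at least one edge. Ordering the level-1 vertices $1,\dots,n$ and level-2 vertices $1,\dots,n+1$, the multiplicity matrix $M_\Gamma$ has $(i,j)$ entry equal to the number of edges joining level-2 vertex $i$ and level-1 vertex $j$. Rank is over $\mathbb{Q}$ (equivalently $\mathbb{C}$). *)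

theory Defs
  imports "Jordan_Normal_Form.DL_Rank"
begin

text \<open>A finite bipartite multigraph with n level-1 vertices (indexed 0..n-1) and
  n+1 level-2 vertices (indexed 0..n) with edges only between levels is determined by
  its multiplicities: E i j = number of edges joining level-2 vertex i and level-1 vertex j.
  Values of E outside the index range are irrelevant.\<close>

definition in_G :: "nat \<Rightarrow> (nat \<Rightarrow> nat \<Rightarrow> nat) \<Rightarrow> bool" where
  "in_G n E \<longleftrightarrow>
     (\<forall>i<n+1. \<exists>j<n. E i j > 0) \<and> (\<forall>j<n. \<exists>i<n+1. E i j > 0)"

definition mult_matrix :: "nat \<Rightarrow> (nat \<Rightarrow> nat \<Rightarrow> nat) \<Rightarrow> rat mat" where
  "mult_matrix n E = mat (n+1) n (\<lambda>(i,j). of_nat (E i j))"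

definition num_edges :: "nat \<Rightarrow> (nat \<Rightarrow> nat \<Rightarrow> nat) \<Rightarrow> nat" where
  "num_edges n E = (\<Sum>i<n+1. \<Sum>j<n. E i j)"

definition edge_subgraph :: "nat \<Rightarrow> (nat \<Rightarrow> nat \<Rightarrow> nat) \<Rightarrow> (nat \<Rightarrow> nat \<Rightarrow> nat) \<Rightarrow> bool" where
  "edge_subgraph n e E \<longleftrightarrow> (\<forall>i<n+1. \<forall>j<n. e i j \<le> E i j)"

end

theory Submission
  imports Defs
begin

text \<open>Since M has rank n, its n+1 rows satisfy a nontrivial linear relation u^T M = 0, and
  deleting a row r with u_r \<noteq> 0 leaves a nonsingular n \<times> n matrix. A nonzero term of the
  Leibniz expansion of its determinant is a perfect matching between the remaining n level-2
  vertices and the n level-1 vertices; adding any edge at the level-2 vertex r gives a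
  subgraph in G_n with n+1 edges.\<close>

lemma (in vec_space) rank_le_card_set_cols:
  assumes "A \<in> carrier_mat n nc"
  shows "rank A \<le> card (set (cols A))"
proof -
  obtain S where S: "maximal S (\<lambda>T. T \<subseteq> set (cols A) \<and> lin_indpt T)"
    using maximal_exists[of "\<lambda>T. T \<subseteq> set (cols A) \<and> lin_indpt T" "card (set (cols A))" "{}"]
    by (meson List.finite_set card_mono empty_iff empty_subsetI finite_lin_indpt2 rev_finite_subset)
  then have "card S \<le> card (set (cols A))"
    by (simp add: card_mono maximal_def)
  then show ?thesis
    using rank_card_indpt[OF assms S] by simp
qed

lemma (in vec_space) full_rank_distinct_cols:
  assumes "A \<in> carrier_mat n nc" and "rank A = nc"
  shows "distinct (cols A)"
  using rank_le_card_set_cols[OF assms(1)] assms card_distinct card_length[of "cols A"]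
  by (metis antisym carrier_matD(2) cols_length)

lemma (in vec_space) full_rank_mult_mat_vec_eq_zero:
  assumes A: "A \<in> carrier_mat n nc" and rank: "rank A = nc"
    and v: "v \<in> carrier_vec nc" and Av: "A *\<^sub>v v = 0\<^sub>v n"
  shows "v = 0\<^sub>v nc"
  using lin_depI[OF A v _ Av] full_rank_lin_indpt[OF A rank] full_rank_distinct_cols[OF A rank]
  by blast

lemma wide_mat_nontrivial_kernel:
  fixes B :: "'a::field mat"
  assumes B: "B \<in> carrier_mat nr nc" and wide: "nr < nc"
  obtains v where "v \<in> carrier_vec nc" "v \<noteq> 0\<^sub>v nc" "B *\<^sub>v v = 0\<^sub>v nr"
proof -
  define C where "C = mat\<^sub>r nc nc (\<lambda>i. if i = nc - 1 then 0\<^sub>v nc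
                                      else vec nc (\<lambda>j. if i < nr then B $$ (i, j) else 0))"
  have C: "C \<in> carrier_mat nc nc"
    unfolding C_def by simp
  have "det C = 0"
    unfolding C_def using wide by (intro det_row_0) auto
  then obtain v where v: "v \<in> carrier_vec nc" "v \<noteq> 0\<^sub>v nc" "C *\<^sub>v v = 0\<^sub>v nc"
    using det_0_iff_vec_prod_zero_field[OF C] by blast
  have "B *\<^sub>v v = 0\<^sub>v nr"
  proof (rule eq_vecI)
    fix i assume "i < dim_vec (0\<^sub>v nr :: 'a vec)"
    then have i: "i < nr" by simp
    then have "row B i = row C i"
      using B wide unfolding C_def by (auto intro!: eq_vecI)
    then have "(B *\<^sub>v v) $ i = (C *\<^sub>v v) $ i"
      using B C i wide by simp
    then show "(B *\<^sub>v v) $ i = 0\<^sub>v nr $ i"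
      using v(3) i wide by simp
  qed (use B in simp)
  then show thesis using that v by blast
qed

definition delete_row :: "'a mat \<Rightarrow> nat \<Rightarrow> 'a mat" where
  "delete_row A r = mat (dim_row A - 1) (dim_col A) (\<lambda>(i, j). A $$ (insert_index r i, j))"

lemma delete_row_carrier [simp]:
  "A \<in> carrier_mat (Suc n) nc \<Longrightarrow> delete_row A r \<in> carrier_mat n nc"
  unfolding delete_row_def by simp

lemma index_mult_delete_row:
  assumes "A \<in> carrier_mat (Suc n) nc" and "r < Suc n" and "i < n"
  shows "(delete_row A r *\<^sub>v v) $ i = (A *\<^sub>v v) $ insert_index r i"
proof -
  have "insert_index r i < Suc n"
    using assms(3) by (simp add: insert_index_def)
  then have "row (delete_row A r) i = row A (insert_index r i)"
    using assms unfolding delete_row_def by (intro eq_vecI) auto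
  then show ?thesis
    using assms \<open>insert_index r i < Suc n\<close> by (simp add: delete_row_def)
qed

text \<open>If A v vanishes off row r, then u_r (A v)_r = u \<bullet> A v = (u^T A) \<bullet> v = 0.\<close>

lemma det_delete_row_neq_0:
  fixes A :: "'a::field mat"
  assumes A: "A \<in> carrier_mat (Suc n) n"
    and ker: "\<And>v. v \<in> carrier_vec n \<Longrightarrow> A *\<^sub>v v = 0\<^sub>v (Suc n) \<Longrightarrow> v = 0\<^sub>v n"
    and u: "u \<in> carrier_vec (Suc n)" "transpose_mat A *\<^sub>v u = 0\<^sub>v n"
    and r: "r < Suc n" "u $ r \<noteq> 0"
  shows "det (delete_row A r) \<noteq> 0"
proof
  assume "det (delete_row A r) = 0"
  then obtain v where v: "v \<in> carrier_vec n" "v \<noteq> 0\<^sub>v n" "delete_row A r *\<^sub>v v = 0\<^sub>v n"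
    unfolding det_0_iff_vec_prod_zero_field[OF delete_row_carrier[OF A]] by blast
  define w where "w = A *\<^sub>v v"
  have w: "w \<in> carrier_vec (Suc n)"
    unfolding w_def using A v(1) by simp
  have w_off_r: "w $ k = 0" if "k < Suc n" "k \<noteq> r" for k
  proof -
    have "delete_index r k < n"
      using that r(1) by (auto simp: delete_index_def)
    then have "(delete_row A r *\<^sub>v v) $ delete_index r k = w $ insert_index r (delete_index r k)"
      unfolding w_def by (rule index_mult_delete_row[OF A r(1)])
    also have "insert_index r (delete_index r k) = k"
      using that(2) by (rule insert_delete_index)
    finally show ?thesis
      using v(3) \<open>delete_index r k < n\<close> by simp
  qed
  have "0 = (transpose_mat A *\<^sub>v u) \<bullet> v"
    using u(2) v(1) by simp
  also have "\<dots> = u \<bullet> w"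
    unfolding w_def using transpose_vec_mult_scalar[OF A v(1) u(1)] .
  also have "\<dots> = (\<Sum>k\<in>{0..<Suc n}. u $ k * w $ k)"
    using w by (simp add: scalar_prod_def)
  also have "\<dots> = u $ r * w $ r + (\<Sum>k\<in>{0..<Suc n} - {r}. u $ k * w $ k)"
    using r(1) by (intro sum.remove) auto
  also have "(\<Sum>k\<in>{0..<Suc n} - {r}. u $ k * w $ k) = 0"
    using w_off_r by (intro sum.neutral) auto
  finally have "w $ r = 0"
    using r(2) by simp
  have "w = 0\<^sub>v (Suc n)"
  proof (rule eq_vecI)
    fix k assume "k < dim_vec (0\<^sub>v (Suc n) :: 'a vec)"
    then show "w $ k = 0\<^sub>v (Suc n) $ k"
      using w_off_r \<open>w $ r = 0\<close> by (cases "k = r") auto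
  qed (use w in simp)
  then show False
    using ker[OF v(1)] v(2) unfolding w_def by simp
qed

lemma full_column_rank_delete_row_nonsingular:
  fixes A :: "'a::field mat"
  assumes A: "A \<in> carrier_mat (Suc n) n" and rank: "vec_space.rank (Suc n) A = n"
  obtains r where "r < Suc n" "det (delete_row A r) \<noteq> 0"
proof -
  obtain u where u: "u \<in> carrier_vec (Suc n)" "u \<noteq> 0\<^sub>v (Suc n)" "transpose_mat A *\<^sub>v u = 0\<^sub>v n"
    using wide_mat_nontrivial_kernel[of "transpose_mat A" n "Suc n"] A by auto
  then obtain r where r: "r < Suc n" "u $ r \<noteq> 0"
    by (metis carrier_vecD eq_vecI index_zero_vec)
  have "v = 0\<^sub>v n" if "v \<in> carrier_vec n" "A *\<^sub>v v = 0\<^sub>v (Suc n)" for v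
    using vec_space.full_rank_mult_mat_vec_eq_zero[OF A rank that] .
  then show thesis
    using that r det_delete_row_neq_0[OF A _ u(1,3) r] by blast
qed

lemma det_neq_0_nonzero_transversal:
  assumes "A \<in> carrier_mat n n" and "det A \<noteq> 0"
  obtains p where "p permutes {0..<n}" "\<And>i. i < n \<Longrightarrow> A $$ (i, p i) \<noteq> 0"
proof -
  have "\<exists>p. p permutes {0..<n} \<and> (\<Prod>i = 0..<n. A $$ (i, p i)) \<noteq> 0"
  proof (rule ccontr)
    assume "\<nexists>p. p permutes {0..<n} \<and> (\<Prod>i = 0..<n. A $$ (i, p i)) \<noteq> 0"
    then have "det A = 0"
      unfolding det_def'[OF assms(1)] by (intro sum.neutral) auto
    with assms(2) show False ..
  qed
  then obtain p where "p permutes {0..<n}" "(\<Prod>i = 0..<n. A $$ (i, p i)) \<noteq> 0"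
    by blast
  moreover have "A $$ (i, p i) \<noteq> 0" if "i < n" "(\<Prod>i = 0..<n. A $$ (i, p i)) \<noteq> 0" for i
  proof
    assume "A $$ (i, p i) = 0"
    with that(1) have "\<exists>k\<in>{0..<n}. A $$ (k, p k) = 0"
      by auto
    then have "(\<Prod>i = 0..<n. A $$ (i, p i)) = 0"
      by (rule prod_zero[OF finite_atLeastLessThan])
    with that(2) show False ..
  qed
  ultimately show thesis
    using that by blast
qed

lemma mult_matrix_full_rank_matching:
  assumes "vec_space.rank (n+1) (mult_matrix n E) = n"
  obtains r p where "r < n+1" "p permutes {0..<n}" "\<And>i. i < n \<Longrightarrow> 0 < E (insert_index r i) (p i)"
proof -
  have M: "mult_matrix n E \<in> carrier_mat (Suc n) n"
    unfolding mult_matrix_def by simp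
  obtain r where r: "r < Suc n" "det (delete_row (mult_matrix n E) r) \<noteq> 0"
    using full_column_rank_delete_row_nonsingular[OF M] assms by auto
  obtain p where p: "p permutes {0..<n}" "\<And>i. i < n \<Longrightarrow> delete_row (mult_matrix n E) r $$ (i, p i) \<noteq> 0"
    using det_neq_0_nonzero_transversal[OF delete_row_carrier[OF M] r(2)] by blast
  have "0 < E (insert_index r i) (p i)" if "i < n" for i
  proof -
    have "p i < n" "insert_index r i < Suc n"
      using permutes_in_image[OF p(1)] that by (auto simp: insert_index_def)
    then show ?thesis
      using p(2)[OF that] that unfolding delete_row_def mult_matrix_def by simp
  qed
  then show thesis
    using that r(1) p(1) by simp
qed

lemma minimal_reduction_of_edge_choice:
  fixes f :: "nat \<Rightarrow> nat"
  assumes edge: "\<And>i. i < n+1 \<Longrightarrow> f i < n \<and> 0 < E i (f i)"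
    and onto: "\<And>j. j < n \<Longrightarrow> \<exists>i<n+1. f i = j"
  defines "e \<equiv> \<lambda>i j. of_bool (j = f i)"
  shows "edge_subgraph n e E \<and> in_G n e \<and> num_edges n e = n + 1"
proof (intro conjI)
  show "edge_subgraph n e E"
    unfolding edge_subgraph_def e_def using edge by (auto simp: Suc_le_eq)
  show "in_G n e"
    unfolding in_G_def e_def using edge onto by fastforce
  have "(\<Sum>j<n. e i j) = 1" if "i < n+1" for i
    unfolding e_def using edge[OF that] by simp
  then show "num_edges n e = n + 1"
    unfolding num_edges_def by simp
qed

lemma minimal_reduction_of_matching:
  assumes r: "r < n+1" and j0: "j0 < n" "0 < E r j0"
    and p: "p permutes {0..<n}"
    and matched: "\<And>i. i < n \<Longrightarrow> 0 < E (insert_index r i) (p i)"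
  shows "\<exists>e. edge_subgraph n e E \<and> in_G n e \<and> num_edges n e = n + 1"
proof -
  define f where "f i = (if i = r then j0 else p (delete_index r i))" for i
  have "f i < n \<and> 0 < E i (f i)" if "i < n+1" for i
  proof (cases "i = r")
    case False
    then have "delete_index r i < n"
      using that r by (auto simp: delete_index_def)
    moreover have "insert_index r (delete_index r i) = i"
      using False by (rule insert_delete_index)
    ultimately show ?thesis
      using False matched[of "delete_index r i"] permutes_in_image[OF p] by (simp add: f_def)
  qed (use j0 f_def in simp)
  moreover have "\<exists>i<n+1. f i = j" if "j < n" for j
  proof -
    have "j \<in> p ` {0..<n}"
      using permutes_image[OF p] that by simp
    then obtain k where "k < n" "p k = j"
      by auto
    moreover have "insert_index r k < n+1"
      using \<open>k < n\<close> by (simp add: insert_index_def)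
    ultimately show ?thesis
      by (intro exI[of _ "insert_index r k"]) (simp add: f_def)
  qed
  ultimately show ?thesis
    using minimal_reduction_of_edge_choice by blast
qed

theorem theorem3p1:
  fixes n :: nat and E :: "nat \<Rightarrow> nat \<Rightarrow> nat"
  assumes "n \<ge> 1"
    and "in_G n E"
    and "vec_space.rank (n+1) (mult_matrix n E) = n"
  shows "\<exists>e. edge_subgraph n e E \<and> in_G n e \<and> num_edges n e = n + 1"
proof -
  obtain r p where r: "r < n+1" and p: "p permutes {0..<n}"
    and matched: "\<And>i. i < n \<Longrightarrow> 0 < E (insert_index r i) (p i)"
    using mult_matrix_full_rank_matching[OF assms(3)] by blast
  obtain j0 where j0: "j0 < n" "0 < E r j0"
    using assms(2) r unfolding in_G_def by blast
  show ?thesis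
    by (rule minimal_reduction_of_matching[OF r j0 p matched])
qed

end
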